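(* Let $\Omega\subseteq\mathbb{R}^n$ be open, let $f,g\in\mathbb{A}(\Omega)$ be D-continuous, and let $D$ be a dense subset of $\Omega$. Then: (a) if $f(x)\le g(x)$ for all $x\in D$, then $f(x)\le g(x)$ for all $x\in\Omega$; (b) if $f(x)=g(x)$ for all $x\in D$, then $f(x)=g(x)$ for all $x\in\Omega$; (c) if $f(x)\subseteq g(x)$ for all $x\in D$, then $f(x)\subseteq g(x)$ for all $x\in\Omega$.
   Context: $\overline{\mathbb{R}}=\mathbb{R}\cup\{\pm\infty\}$, $\mathbb{I}\overline{\mathbb{R}}$ is the set of closed intervals $[\underline a,\overline a]$ with $\underline a\le\overline a$ in $\overline{\mathbb{R}}$, $a\in\overline{\mathbb{R}}$ identified with $[a,a]$. $\mathbb{A}(X)$ is the set of functions $X\to\mathbb{I}\overline{\mathbb{R}}$. Order: $[\underline a,\overline a]\le[\underline b,\overline b]$ iff $\underline a\le\underline b$ and $\overline a\le\overline b$. $B_\delta(x)=\{y\in\Omega:\|x-y\|<\delta\}$. For dense $D\subseteq\Omega$ and $f\in\mathbb{A}(D)$: $I(D,\Omega,f)(x)=\sup_{\delta>0}\inf\{z\in f(y):y\in B_\delta(x)\cap D\}$, $S(D,\Omega,f)(x)=\inf_{\delta>0}\sup\{z\in f(y):y\in B_\delta(x)\cap D\}$, $F(D,\Omega,f)(x)=[I(D,\Omega,f)(x),S(D,\Omega,f)(x)]$. $f\in\mathbb{A}(\Omega)$ is D-continuous if $F(D,\Omega,f)=f$ for every dense subset $D$ of $\Omega$ (using the restriction of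 $f$ to $D$). *)

theory Defs
  imports "HOL-Analysis.Analysis" "HOL-Library.Extended_Real"
begin

text \<open>An element of the interval set IR-bar is represented as a pair (lo, hi) of extended
reals with lo \<le> hi; a real a is identified with (a, a).\<close>
type_synonym ival = "ereal \<times> ereal"

definition is_ival :: "ival \<Rightarrow> bool" where
  "is_ival a \<longleftrightarrow> fst a \<le> snd a"

definition ival_set :: "ival \<Rightarrow> ereal set" where
  "ival_set a = {z. fst a \<le> z \<and> z \<le> snd a}"

definition ival_le :: "ival \<Rightarrow> ival \<Rightarrow> bool" where
  "ival_le a b \<longleftrightarrow> fst a \<le> fst b \<and> snd a \<le> snd b"

definition in_A :: "'a set \<Rightarrow> ('a \<Rightarrow> ival) \<Rightarrow> bool" where
  "in_A X f \<longleftrightarrow> (\<forall>x\<in>X. is_ival (f x))"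

definition Bdelta :: "('a::metric_space) set \<Rightarrow> real \<Rightarrow> 'a \<Rightarrow> 'a set" where
  "Bdelta \<Omega> \<delta> x = {y\<in>\<Omega>. dist x y < \<delta>}"

definition dense_in :: "('a::topological_space) set \<Rightarrow> 'a set \<Rightarrow> bool" where
  "dense_in D \<Omega> \<longleftrightarrow> D \<subseteq> \<Omega> \<and> \<Omega> \<subseteq> closure D"

definition Ifun :: "('a::metric_space) set \<Rightarrow> 'a set \<Rightarrow> ('a \<Rightarrow> ival) \<Rightarrow> 'a \<Rightarrow> ereal" where
  "Ifun D \<Omega> f x = (SUP \<delta>\<in>{0<..}. Inf {z. \<exists>y\<in>Bdelta \<Omega> \<delta> x \<inter> D. z \<in> ival_set (f y)})"

definition Sfun :: "('a::metric_space) set \<Rightarrow> 'a set \<Rightarrow> ('a \<Rightarrow> ival) \<Rightarrow> 'a \<Rightarrow> ereal" where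
  "Sfun D \<Omega> f x = (INF \<delta>\<in>{0<..}. Sup {z. \<exists>y\<in>Bdelta \<Omega> \<delta> x \<inter> D. z \<in> ival_set (f y)})"

definition Ffun :: "('a::metric_space) set \<Rightarrow> 'a set \<Rightarrow> ('a \<Rightarrow> ival) \<Rightarrow> 'a \<Rightarrow> ival" where
  "Ffun D \<Omega> f x = (Ifun D \<Omega> f x, Sfun D \<Omega> f x)"

text \<open>D-continuity of f in A(Omega): F(D,Omega,f|D) = f on Omega for every dense D.
 Ffun only evaluates f on D, so passing f is the same as passing its restriction.\<close>
definition D_continuous :: "('a::metric_space) set \<Rightarrow> ('a \<Rightarrow> ival) \<Rightarrow> bool" where
  "D_continuous \<Omega> f \<longleftrightarrow> in_A \<Omega> f \<and>
     (\<forall>D. dense_in D \<Omega> \<longrightarrow> (\<forall>x\<in>\<Omega>. Ffun D \<Omega> f x = f x))"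

end

theory Submission
  imports Defs
begin

text \<open>A D-continuous function is recovered on \<open>\<Omega>\<close> from its values on any dense set \<open>D\<close>
as \<open>F(D,\<Omega>,f)\<close>, and \<open>F(D,\<Omega>,f)\<close> depends on \<open>f\<close> only through the sets of values
\<open>f(B\<^sub>\<delta>(x) \<inter> D)\<close>. Comparing those sets pointwise on \<open>D\<close> compares their infima and suprema,
hence the lower and upper ends of \<open>F\<close>.\<close>

definition values_near :: "('a::metric_space) set \<Rightarrow> 'a set \<Rightarrow> ('a \<Rightarrow> ival) \<Rightarrow> 'a \<Rightarrow> real \<Rightarrow> ereal set"
  where "values_near D \<Omega> f x \<delta> = {z. \<exists>y\<in>Bdelta \<Omega> \<delta> x \<inter> D. z \<in> ival_set (f y)}"

lemma Ifun_values_near: "Ifun D \<Omega> f x = (SUP \<delta>\<in>{0<..}. Inf (values_near D \<Omega> f x \<delta>))"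
  unfolding Ifun_def values_near_def ..

lemma Sfun_values_near: "Sfun D \<Omega> f x = (INF \<delta>\<in>{0<..}. Sup (values_near D \<Omega> f x \<delta>))"
  unfolding Sfun_def values_near_def ..

lemma ival_set_mono:
  assumes "fst b \<le> fst a" and "snd a \<le> snd b"
  shows "ival_set a \<subseteq> ival_set b"
  using assms unfolding ival_set_def by (auto intro: order_trans)

lemma Inf_values_near_mono:
  assumes "\<forall>y\<in>D. is_ival (f y)" and "\<forall>y\<in>D. ival_le (f y) (g y)"
  shows "Inf (values_near D \<Omega> f x \<delta>) \<le> Inf (values_near D \<Omega> g x \<delta>)"
proof (rule Inf_greatest)
  fix z assume "z \<in> values_near D \<Omega> g x \<delta>"
  then obtain y where y: "y \<in> Bdelta \<Omega> \<delta> x \<inter> D" and z: "z \<in> ival_set (g y)"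
    unfolding values_near_def by auto
  have "fst (f y) \<in> values_near D \<Omega> f x \<delta>"
    using y assms(1) unfolding values_near_def ival_set_def is_ival_def by auto
  then have "Inf (values_near D \<Omega> f x \<delta>) \<le> fst (f y)" by (rule Inf_lower)
  also have "\<dots> \<le> z" using y z assms(2) unfolding ival_set_def ival_le_def by force
  finally show "Inf (values_near D \<Omega> f x \<delta>) \<le> z" .
qed

lemma Sup_values_near_mono:
  assumes "\<forall>y\<in>D. is_ival (g y)" and "\<forall>y\<in>D. ival_le (f y) (g y)"
  shows "Sup (values_near D \<Omega> f x \<delta>) \<le> Sup (values_near D \<Omega> g x \<delta>)"
proof (rule Sup_least)
  fix z assume "z \<in> values_near D \<Omega> f x \<delta>"
  then obtain y where y: "y \<in> Bdelta \<Omega> \<delta> x \<inter> D" and z: "z \<in> ival_set (f y)"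
    unfolding values_near_def by auto
  have "z \<le> snd (g y)" using y z assms(2) unfolding ival_set_def ival_le_def by force
  also have "snd (g y) \<in> values_near D \<Omega> g x \<delta>"
    using y assms(1) unfolding values_near_def ival_set_def is_ival_def by auto
  then have "snd (g y) \<le> Sup (values_near D \<Omega> g x \<delta>)" by (rule Sup_upper)
  finally show "z \<le> Sup (values_near D \<Omega> g x \<delta>)" .
qed

lemma values_near_mono:
  assumes "\<forall>y\<in>D. ival_set (f y) \<subseteq> ival_set (g y)"
  shows "values_near D \<Omega> f x \<delta> \<subseteq> values_near D \<Omega> g x \<delta>"
  using assms unfolding values_near_def by blast

lemma Ffun_ival_le_mono:
  assumes "\<forall>y\<in>D. is_ival (f y)" and "\<forall>y\<in>D. is_ival (g y)"
    and "\<forall>y\<in>D. ival_le (f y) (g y)"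
  shows "ival_le (Ffun D \<Omega> f x) (Ffun D \<Omega> g x)"
proof -
  have "Ifun D \<Omega> f x \<le> Ifun D \<Omega> g x"
    unfolding Ifun_values_near using Inf_values_near_mono[OF assms(1,3)] by (rule SUP_mono')
  moreover have "Sfun D \<Omega> f x \<le> Sfun D \<Omega> g x"
    unfolding Sfun_values_near using Sup_values_near_mono[OF assms(2,3)] by (rule INF_mono')
  ultimately show ?thesis unfolding ival_le_def Ffun_def by simp
qed

lemma Ffun_ival_set_mono:
  assumes "\<forall>y\<in>D. ival_set (f y) \<subseteq> ival_set (g y)"
  shows "ival_set (Ffun D \<Omega> f x) \<subseteq> ival_set (Ffun D \<Omega> g x)"
proof (rule ival_set_mono)
  show "fst (Ffun D \<Omega> g x) \<le> fst (Ffun D \<Omega> f x)"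
    unfolding Ffun_def Ifun_values_near
    using values_near_mono[OF assms] by (simp add: SUP_mono' Inf_superset_mono)
  show "snd (Ffun D \<Omega> f x) \<le> snd (Ffun D \<Omega> g x)"
    unfolding Ffun_def Sfun_values_near
    using values_near_mono[OF assms] by (simp add: INF_mono' Sup_subset_mono)
qed

lemma Ffun_cong:
  assumes "\<forall>y\<in>D. f y = g y"
  shows "Ffun D \<Omega> f x = Ffun D \<Omega> g x"
proof -
  have "values_near D \<Omega> f x = values_near D \<Omega> g x"
    using assms unfolding values_near_def by (intro ext) auto
  then show ?thesis unfolding Ffun_def Ifun_values_near Sfun_values_near by simp
qed

lemma D_continuous_eq_Ffun:
  assumes "D_continuous \<Omega> f" and "dense_in D \<Omega>" and "x \<in> \<Omega>"
  shows "f x = Ffun D \<Omega> f x"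
  using assms unfolding D_continuous_def by simp

lemma D_continuous_is_ival_on_dense:
  assumes "D_continuous \<Omega> f" and "dense_in D \<Omega>"
  shows "\<forall>y\<in>D. is_ival (f y)"
  using assms unfolding D_continuous_def in_A_def dense_in_def by auto

theorem theorem14:
  fixes \<Omega> D :: "(real ^ 'n) set" and f g :: "real ^ 'n \<Rightarrow> ival"
  assumes "open \<Omega>"
    and "in_A \<Omega> f" and "in_A \<Omega> g"
    and "D_continuous \<Omega> f" and "D_continuous \<Omega> g"
    and "dense_in D \<Omega>"
  shows "((\<forall>x\<in>D. ival_le (f x) (g x)) \<longrightarrow> (\<forall>x\<in>\<Omega>. ival_le (f x) (g x)))
    \<and> ((\<forall>x\<in>D. f x = g x) \<longrightarrow> (\<forall>x\<in>\<Omega>. f x = g x))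
    \<and> ((\<forall>x\<in>D. ival_set (f x) \<subseteq> ival_set (g x)) \<longrightarrow> (\<forall>x\<in>\<Omega>. ival_set (f x) \<subseteq> ival_set (g x)))"
proof -
  note f_eq = D_continuous_eq_Ffun[OF assms(4,6)]
  note g_eq = D_continuous_eq_Ffun[OF assms(5,6)]
  have "\<forall>x\<in>\<Omega>. ival_le (f x) (g x)" if "\<forall>x\<in>D. ival_le (f x) (g x)"
    using Ffun_ival_le_mono[OF D_continuous_is_ival_on_dense[OF assms(4,6)]
        D_continuous_is_ival_on_dense[OF assms(5,6)] that] f_eq g_eq by simp
  moreover have "\<forall>x\<in>\<Omega>. f x = g x" if "\<forall>x\<in>D. f x = g x"
    using Ffun_cong[OF that] f_eq g_eq by simp
  moreover have "\<forall>x\<in>\<Omega>. ival_set (f x) \<subseteq> ival_set (g x)"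
    if "\<forall>x\<in>D. ival_set (f x) \<subseteq> ival_set (g x)"
    using Ffun_ival_set_mono[OF that] f_eq g_eq by simp
  ultimately show ?thesis by blast
qed

end
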